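(* With $S_\rho$ the globally defined, Lipschitz (in $u$), $p$-periodic cut-off time-dependent semiflow of the lemma above, set $\Phi_t:=S_\rho(t+p,t;\cdot):X\to X$ for $t\in\mathbb{R}$, and for $\gamma>0$ define $G_t(\gamma)=\{u\in X:$ there is a negative semiorbit $\{u_m\}_{m\le0}$ of $\Phi_t$ (i.e. $\Phi_t(u_m)=u_{m+1}$ for $m\le -1$) with $u_0=u$ and $\limsup_{m\to-\infty}\frac{1}{|m|}\ln\|u_m\|\le-\ln\gamma\}$. Then $S_\rho(t,s;G_s(\gamma))=G_t(\gamma)$ for all $t\ge s$.
   Context: $X=C([-\tau,0];\mathbb{R}^n)$ with sup norm. $S_\rho$ is the time-dependent semiflow defined by the cut-off integral equation $S_\rho(t,s;u)=T_0(t-s)u+\iota^{-1}\int_s^t T_0^{\odot*}(t-r)[B(r)S_\rho(r,s;u)+R_{\rho,r}(r,S_\rho(r,s;u))]dr$ (notation as in the periodicity lemma: shift semigroup $T_0$, sun-star extension, embedding $\iota u=(u(0),u)$, linear part $B(t)=D_2F(t,0)$ and cut-off nonlinearity $R_{\rho,r}$ of a $p$-periodic $C^k$ delay equation with $f(t,0)=0$), with $\rho>0$ small enough that $S_\rho$ is defined on $\{t\ge s\}\times X$, $S_\rho(t,s;\cdot)$ is Lipschitz on $X$, and $S_\rho(t+p,s+p;\cdot)=S_\rho(t,s;\cdot)$. The semiflow property $S_\rho(t,r;S_\rho(r,s;u))=S_\rho(t,s;u)$ for $s\le r\le t$ holds. It is moreover assumed (as holds for the invariant manifolds produced by the Lipschitz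 invariant manifold theorem for $\Phi_t$) that $G_{t}(\gamma)=G_{t-jp}(\gamma)$ for $j\in\mathbb{N}$, which follows from $\Phi_{t-jp}=\Phi_t$. *)

theory Defs
  imports "HOL-Analysis.Analysis"
begin

text \<open>Phase space X = C([-tau,0]; R^n), represented as functions real => real^n that are
  continuous on [-tau,0] and (normalised to be) zero outside [-tau,0].\<close>
definition Xc :: "real \<Rightarrow> (real \<Rightarrow> real^'n) set" where
  "Xc \<tau> = {\<phi>. continuous_on {-\<tau>..0} \<phi> \<and> (\<forall>x. x \<notin> {-\<tau>..0} \<longrightarrow> \<phi> x = 0)}"

definition supn :: "real \<Rightarrow> (real \<Rightarrow> real^'n) \<Rightarrow> real" where
  "supn \<tau> \<phi> = (SUP x\<in>{-\<tau>..0}. norm (\<phi> x))"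

definition Phi :: "(real \<Rightarrow> real \<Rightarrow> 'x \<Rightarrow> 'x) \<Rightarrow> real \<Rightarrow> real \<Rightarrow> 'x \<Rightarrow> 'x" where
  "Phi S p t = (\<lambda>u. S (t + p) t u)"

definition neg_semiorbit :: "('x \<Rightarrow> 'x) \<Rightarrow> (int \<Rightarrow> 'x) \<Rightarrow> bool" where
  "neg_semiorbit F us \<longleftrightarrow> (\<forall>m::int. m \<le> -1 \<longrightarrow> F (us m) = us (m + 1))"

definition lnE :: "real \<Rightarrow> ereal" where
  "lnE x = (if x = 0 then -\<infinity> else ereal (ln x))"

text \<open>G_t(gamma): points with a negative semiorbit of Phi_t satisfying
  limsup_{m -> -inf} (1/|m|) ln ||u_m|| <= - ln gamma (written with k = -m -> +inf).\<close>
definition Gset :: "(real \<Rightarrow> real \<Rightarrow> (real \<Rightarrow> real^'n) \<Rightarrow> (real \<Rightarrow> real^'n))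
    \<Rightarrow> real \<Rightarrow> real \<Rightarrow> real \<Rightarrow> real \<Rightarrow> (real \<Rightarrow> real^'n) set" where
  "Gset S p \<tau> t \<gamma> = {u \<in> Xc \<tau>. \<exists>us :: int \<Rightarrow> (real \<Rightarrow> real^'n).
      (\<forall>m\<le>0. us m \<in> Xc \<tau>) \<and> neg_semiorbit (Phi S p t) us \<and> us 0 = u \<and>
      limsup (\<lambda>k::nat. lnE (supn \<tau> (us (- int k))) / ereal (real k)) \<le> ereal (- ln \<gamma>)}"

end

theory Submission imports Defs begin

text \<open>The period maps are conjugated by the semiflow: \<open>\<Phi>\<^sub>t \<circ> S(t,s) = S(t,s) \<circ> \<Phi>\<^sub>s\<close>. Hence
  \<open>S(t,s)\<close> carries negative semiorbits of \<open>\<Phi>\<^sub>s\<close> to negative semiorbits of \<open>\<Phi>\<^sub>t\<close>, and since it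
  is Lipschitz and fixes \<open>0\<close>, it changes the norms \<open>\<parallel>u\<^sub>m\<parallel>\<close> by at most a constant factor, which
  does not affect their exponential rate; so \<open>S(t,s) G\<^sub>s \<subseteq> G\<^sub>t\<close>. Conversely, if \<open>v \<in> G\<^sub>t\<close> has
  the semiorbit \<open>(v\<^sub>m)\<close> and \<open>t - j p \<le> s\<close>, then \<open>v\<^sub>-\<^sub>j \<in> G\<^sub>t\<^sub>-\<^sub>j\<^sub>p\<close> (the period maps at \<open>t\<close>
  and \<open>t - j p\<close> agree) and \<open>v = \<Phi>\<^sub>t\<^sup>j v\<^sub>-\<^sub>j = S(t, t - j p) v\<^sub>-\<^sub>j = S(t,s) S(s, t - j p) v\<^sub>-\<^sub>j\<close>,
  where \<open>S(s, t - j p) v\<^sub>-\<^sub>j \<in> G\<^sub>s\<close> by the first inclusion.\<close>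

definition exp_growth_le :: "real \<Rightarrow> (nat \<Rightarrow> real) \<Rightarrow> bool" where
  "exp_growth_le c N \<longleftrightarrow> (\<forall>e>0. eventually (\<lambda>k. N k < exp ((c + e) * real k)) sequentially)"

lemma lnE_div_less_iff:
  assumes "x \<ge> 0" "k \<ge> 1"
  shows "lnE x / ereal (real k) < ereal r \<longleftrightarrow> x < exp (r * real k)"
proof (cases "x = 0")
  case True
  then show ?thesis using assms by (simp add: lnE_def)
next
  case False
  then have "x > 0" using assms by simp
  then have "ln x < r * real k \<longleftrightarrow> x < exp (r * real k)"
    by (metis exp_gt_zero ln_exp ln_less_cancel_iff)
  moreover have "real k > 0" using assms by simp
  ultimately show ?thesis
    using False by (simp add: lnE_def divide_less_eq)
qed

lemma limsup_lnE_div_le_iff_exp_growth_le: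
  assumes "\<And>k. N k \<ge> 0"
  shows "limsup (\<lambda>k. lnE (N k) / ereal (real k)) \<le> ereal c \<longleftrightarrow> exp_growth_le c N"
proof -
  have large: "eventually (\<lambda>k. k \<ge> (1::nat)) sequentially"
    by (rule eventually_ge_at_top)
  show ?thesis
    unfolding Limsup_le_iff exp_growth_le_def
  proof (intro iffI allI impI)
    fix e :: real
    assume "e > 0" and "\<forall>y>ereal c. \<forall>\<^sub>F k in sequentially. lnE (N k) / ereal (real k) < y"
    then have "\<forall>\<^sub>F k in sequentially. lnE (N k) / ereal (real k) < ereal (c + e)"
      by simp
    with large show "\<forall>\<^sub>F k in sequentially. N k < exp ((c + e) * real k)"
      by eventually_elim (use lnE_div_less_iff assms in blast)
  next
    fix y
    assume growth: "\<forall>e>0. \<forall>\<^sub>F k in sequentially. N k < exp ((c + e) * real k)"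
      and "y > ereal c"
    then consider r where "y = ereal r" "r > c" | "y = \<infinity>"
      by (cases y) auto
    then show "\<forall>\<^sub>F k in sequentially. lnE (N k) / ereal (real k) < y"
    proof cases
      case 1
      then have "\<forall>\<^sub>F k in sequentially. N k < exp (r * real k)"
        using growth[rule_format, of "r - c"] by simp
      with large show ?thesis
        by eventually_elim (use lnE_div_less_iff assms 1 in auto)
    next
      case 2
      from large show ?thesis
        by eventually_elim (simp add: 2 lnE_def)
    qed
  qed
qed

lemma exp_growth_le_shift_mult:
  assumes growth: "exp_growth_le c N" and "C > 0" and bound: "\<And>k. N' k \<le> C * N (k + j)"
  shows "exp_growth_le c N'"
  unfolding exp_growth_le_def
proof (intro allI impI)
  fix e :: real
  assume "e > 0"
  have "eventually (\<lambda>k. N k < exp ((c + e/2) * real k)) sequentially"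
    using growth \<open>e > 0\<close> unfolding exp_growth_le_def by simp
  then have shifted: "eventually (\<lambda>k. N (k + j) < exp ((c + e/2) * real (k + j))) sequentially"
    by (subst eventually_sequentially_seg)
  define A where "A = ln C + (c + e/2) * real j"
  have large: "eventually (\<lambda>k::nat. A * 2 / e \<le> real k) sequentially"
    using filterlim_real_sequentially unfolding filterlim_at_top by blast
  from shifted large show "eventually (\<lambda>k. N' k < exp ((c + e) * real k)) sequentially"
  proof eventually_elim
    case (elim k)
    have "A \<le> e / 2 * real k"
      using elim(2) \<open>e > 0\<close> by (simp add: field_simps)
    moreover have "(c + e/2) * real (k + j) = c * real k + e/2 * real k + (c + e/2) * real j"
      by (simp add: algebra_simps)
    moreover have "(c + e) * real k = c * real k + e/2 * real k + e/2 * real k"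
      by (simp add: algebra_simps)
    ultimately have "ln C + (c + e/2) * real (k + j) \<le> (c + e) * real k"
      unfolding A_def by linarith
    then have "exp (ln C + (c + e/2) * real (k + j)) \<le> exp ((c + e) * real k)"
      by simp
    then have "C * exp ((c + e/2) * real (k + j)) \<le> exp ((c + e) * real k)"
      using \<open>C > 0\<close> by (simp add: exp_add)
    moreover have "C * N (k + j) < C * exp ((c + e/2) * real (k + j))"
      using elim(1) \<open>C > 0\<close> by simp
    ultimately show ?case
      using bound[of k] by linarith
  qed
qed

lemma limsup_lnE_div_le_transfer:
  assumes "limsup (\<lambda>k. lnE (N k) / ereal (real k)) \<le> ereal c"
    and "\<And>k. N k \<ge> 0" "\<And>k. N' k \<ge> 0" "C > 0" "\<And>k. N' k \<le> C * N (k + j)"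
  shows "limsup (\<lambda>k. lnE (N' k) / ereal (real k)) \<le> ereal c"
proof -
  have "exp_growth_le c N"
    using assms(1,2) limsup_lnE_div_le_iff_exp_growth_le by blast
  then have "exp_growth_le c N'"
    using exp_growth_le_shift_mult assms(4,5) by blast
  then show ?thesis
    using assms(3) limsup_lnE_div_le_iff_exp_growth_le by blast
qed

lemma supn_nonneg:
  assumes "u \<in> Xc \<tau>" "\<tau> \<ge> 0"
  shows "0 \<le> supn \<tau> u"
proof -
  have "continuous_on {-\<tau>..0} (\<lambda>x. norm (u x))"
    using assms(1) unfolding Xc_def by (auto intro: continuous_intros)
  then have "compact ((\<lambda>x. norm (u x)) ` {-\<tau>..0})"
    by (rule compact_continuous_image) simp
  then have "bdd_above ((\<lambda>x. norm (u x)) ` {-\<tau>..0})"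
    by (meson bounded_imp_bdd_above compact_imp_bounded)
  then have "norm (u 0) \<le> supn \<tau> u"
    unfolding supn_def by (rule cSUP_upper[rotated]) (use assms in simp)
  then show ?thesis
    using norm_ge_zero order_trans by blast
qed

lemma neg_semiorbit_funpow:
  assumes "neg_semiorbit F us"
  shows "(F ^^ n) (us (- int n)) = us 0"
proof (induction n)
  case 0
  then show ?case by simp
next
  case (Suc n)
  have "- int (Suc n) \<le> -1" and "- int (Suc n) + 1 = - int n"
    by simp_all
  then have "F (us (- int (Suc n))) = us (- int n)"
    using assms unfolding neg_semiorbit_def by metis
  with Suc show ?case
    by (simp only: funpow_Suc_right comp_apply)
qed

locale periodic_semiflow =
  fixes S :: "real \<Rightarrow> real \<Rightarrow> (real \<Rightarrow> real^'n) \<Rightarrow> (real \<Rightarrow> real^'n)"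
    and \<tau> p :: real
  assumes tau_nonneg: "\<tau> \<ge> 0" and p_pos: "p > 0"
    and maps: "\<And>t s u. s \<le> t \<Longrightarrow> u \<in> Xc \<tau> \<Longrightarrow> S t s u \<in> Xc \<tau>"
    and lipschitz: "\<And>t s. s \<le> t \<Longrightarrow> \<exists>L. \<forall>u\<in>Xc \<tau>. \<forall>v\<in>Xc \<tau>.
                       supn \<tau> (\<lambda>x. S t s u x - S t s v x) \<le> L * supn \<tau> (\<lambda>x. u x - v x)"
    and initial: "\<And>s u. u \<in> Xc \<tau> \<Longrightarrow> S s s u = u"
    and zero: "\<And>t s. s \<le> t \<Longrightarrow> S t s (\<lambda>x. 0) = (\<lambda>x. 0)"
    and periodic: "\<And>t s u. s \<le> t \<Longrightarrow> u \<in> Xc \<tau> \<Longrightarrow> S (t + p) (s + p) u = S t s u"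
    and semiflow: "\<And>t r s u. s \<le> r \<Longrightarrow> r \<le> t \<Longrightarrow> u \<in> Xc \<tau> \<Longrightarrow>
                       S t r (S r s u) = S t s u"
begin

lemma supn_S_le:
  assumes "a \<le> b"
  obtains C where "C > 0" "\<And>u. u \<in> Xc \<tau> \<Longrightarrow> supn \<tau> (S b a u) \<le> C * supn \<tau> u"
proof -
  obtain L where L: "\<forall>u\<in>Xc \<tau>. \<forall>v\<in>Xc \<tau>.
      supn \<tau> (\<lambda>x. S b a u x - S b a v x) \<le> L * supn \<tau> (\<lambda>x. u x - v x)"
    using lipschitz[OF assms] by blast
  have "(\<lambda>x. 0) \<in> Xc \<tau>"
    unfolding Xc_def by simp
  show ?thesis
  proof (rule that[of "max L 1"])
    fix u :: "real \<Rightarrow> real^'n"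
    assume u: "u \<in> Xc \<tau>"
    have "supn \<tau> (S b a u) \<le> L * supn \<tau> u"
      using L u \<open>(\<lambda>x. 0) \<in> Xc \<tau>\<close> zero[OF assms] by (metis (no_types, lifting) diff_zero ext)
    also have "\<dots> \<le> max L 1 * supn \<tau> u"
      using supn_nonneg[OF u tau_nonneg] by (simp add: mult_right_mono)
    finally show "supn \<tau> (S b a u) \<le> max L 1 * supn \<tau> u" .
  qed simp
qed

lemma S_periodic_nat:
  assumes "a \<le> b" "u \<in> Xc \<tau>"
  shows "S (b + real n * p) (a + real n * p) u = S b a u"
proof (induction n)
  case 0
  then show ?case by simp
next
  case (Suc n)
  have "S (b + real (Suc n) * p) (a + real (Suc n) * p) u
      = S ((b + real n * p) + p) ((a + real n * p) + p) u"
    by (simp add: algebra_simps)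
  also have "\<dots> = S (b + real n * p) (a + real n * p) u"
    by (rule periodic) (use assms in auto)
  finally show ?case
    using Suc by simp
qed

lemma Phi_periodic_nat:
  assumes "u \<in> Xc \<tau>"
  shows "Phi S p (t - real n * p) u = Phi S p t u"
  using S_periodic_nat[of "t - real n * p" "t - real n * p + p" u n] assms p_pos
  by (simp add: Phi_def)

lemma Phi_S_commute:
  assumes "a \<le> b" "u \<in> Xc \<tau>"
  shows "Phi S p b (S b a u) = S b a (Phi S p a u)"
proof -
  have "Phi S p b (S b a u) = S (b + p) a u"
    unfolding Phi_def by (rule semiflow) (use assms p_pos in auto)
  also have "\<dots> = S (b + p) (a + p) (S (a + p) a u)"
    by (rule semiflow[symmetric]) (use assms p_pos in auto)
  also have "\<dots> = S b a (Phi S p a u)"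
    unfolding Phi_def by (rule periodic) (use assms p_pos maps in auto)
  finally show ?thesis .
qed

lemma S_eq_funpow_Phi:
  assumes "u \<in> Xc \<tau>"
  shows "S t (t - real n * p) u = (Phi S p t ^^ n) u"
  using assms
proof (induction n arbitrary: u)
  case 0
  then show ?case by (simp add: initial)
next
  case (Suc n)
  have "S t (t - real (Suc n) * p) u = S t (t - real n * p - p) u"
    by (simp add: algebra_simps)
  also have "\<dots> = S t (t - real n * p) (S (t - real n * p) (t - real n * p - p) u)"
    by (rule semiflow[symmetric]) (use p_pos Suc.prems in \<open>auto simp: algebra_simps\<close>)
  also have "S (t - real n * p) (t - real n * p - p) u = Phi S p t u"
    using Phi_periodic_nat[OF Suc.prems, of t "Suc n"] by (simp add: Phi_def algebra_simps)
  also have "S t (t - real n * p) (Phi S p t u) = (Phi S p t ^^ n) (Phi S p t u)"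
    by (rule Suc.IH) (use maps p_pos Suc.prems in \<open>simp add: Phi_def\<close>)
  finally show ?case
    by (simp only: funpow_Suc_right comp_apply)
qed

lemma Gset_image_subset:
  assumes "a \<le> b"
  shows "S b a ` Gset S p \<tau> a \<gamma> \<subseteq> Gset S p \<tau> b \<gamma>"
proof
  fix v
  assume "v \<in> S b a ` Gset S p \<tau> a \<gamma>"
  then obtain u us where v: "v = S b a u" and u: "u \<in> Xc \<tau>"
    and usX: "\<forall>m\<le>0. us m \<in> Xc \<tau>" and orbit: "neg_semiorbit (Phi S p a) us" and "us 0 = u"
    and rate: "limsup (\<lambda>k. lnE (supn \<tau> (us (- int k))) / ereal (real k)) \<le> ereal (- ln \<gamma>)"
    unfolding Gset_def by blast
  obtain C where "C > 0" and C: "\<And>u. u \<in> Xc \<tau> \<Longrightarrow> supn \<tau> (S b a u) \<le> C * supn \<tau> u"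
    using supn_S_le[OF assms] by blast
  define vs where "vs m = S b a (us m)" for m
  have vsX: "\<forall>m\<le>0. vs m \<in> Xc \<tau>"
    using usX maps assms unfolding vs_def by blast
  have "neg_semiorbit (Phi S p b) vs"
    using orbit usX Phi_S_commute[OF assms] unfolding neg_semiorbit_def vs_def by simp
  moreover have "limsup (\<lambda>k. lnE (supn \<tau> (vs (- int k))) / ereal (real k)) \<le> ereal (- ln \<gamma>)"
    by (rule limsup_lnE_div_le_transfer[OF rate _ _ \<open>C > 0\<close>, where j = 0])
      (use usX vsX C in \<open>auto simp: vs_def intro!: supn_nonneg tau_nonneg\<close>)
  moreover have "vs 0 = v"
    using v \<open>us 0 = u\<close> vs_def by simp
  ultimately show "v \<in> Gset S p \<tau> b \<gamma>"
    unfolding Gset_def using vsX by (intro CollectI conjI exI[of _ vs]) auto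
qed

lemma Gset_backward:
  assumes "v \<in> Gset S p \<tau> t \<gamma>"
  obtains w where "w \<in> Gset S p \<tau> (t - real j * p) \<gamma>" "S t (t - real j * p) w = v"
proof -
  obtain vs where vsX: "\<forall>m\<le>0. vs m \<in> Xc \<tau>" and orbit: "neg_semiorbit (Phi S p t) vs"
    and "vs 0 = v"
    and rate: "limsup (\<lambda>k. lnE (supn \<tau> (vs (- int k))) / ereal (real k)) \<le> ereal (- ln \<gamma>)"
    using assms unfolding Gset_def by blast
  define ws where "ws m = vs (m - int j)" for m
  have wsX: "\<forall>m\<le>0. ws m \<in> Xc \<tau>"
    using vsX unfolding ws_def by simp
  have "neg_semiorbit (Phi S p (t - real j * p)) ws"
    using orbit vsX Phi_periodic_nat unfolding neg_semiorbit_def ws_def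
    by (simp add: algebra_simps)
  moreover have "limsup (\<lambda>k. lnE (supn \<tau> (ws (- int k))) / ereal (real k)) \<le> ereal (- ln \<gamma>)"
    by (rule limsup_lnE_div_le_transfer[OF rate _ _ zero_less_one, where j = j])
      (use vsX in \<open>auto simp: ws_def add.commute intro!: supn_nonneg tau_nonneg\<close>)
  ultimately have "ws 0 \<in> Gset S p \<tau> (t - real j * p) \<gamma>"
    unfolding Gset_def using wsX by auto
  moreover have "S t (t - real j * p) (ws 0) = v"
    using S_eq_funpow_Phi neg_semiorbit_funpow[OF orbit] vsX \<open>vs 0 = v\<close>
    unfolding ws_def by simp
  ultimately show ?thesis
    using that by blast
qed

end

theorem mainTheorem3:
  fixes S :: "real \<Rightarrow> real \<Rightarrow> (real \<Rightarrow> real^'n) \<Rightarrow> (real \<Rightarrow> real^'n)"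
    and \<tau> p \<gamma> :: real
  assumes tau_pos: "\<tau> > 0" and p_pos: "p > 0" and gamma_pos: "\<gamma> > 0"
    and maps: "\<And>t s u. s \<le> t \<Longrightarrow> u \<in> Xc \<tau> \<Longrightarrow> S t s u \<in> Xc \<tau>"
    and lipschitz: "\<And>t s. s \<le> t \<Longrightarrow> \<exists>L. \<forall>u\<in>Xc \<tau>. \<forall>v\<in>Xc \<tau>.
                       supn \<tau> (\<lambda>x. S t s u x - S t s v x) \<le> L * supn \<tau> (\<lambda>x. u x - v x)"
    and initial: "\<And>s u. u \<in> Xc \<tau> \<Longrightarrow> S s s u = u"
    and zero: "\<And>t s. s \<le> t \<Longrightarrow> S t s (\<lambda>x. 0) = (\<lambda>x. 0)"
    and periodic: "\<And>t s u. s \<le> t \<Longrightarrow> u \<in> Xc \<tau> \<Longrightarrow> S (t + p) (s + p) u = S t s u"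
    and semiflow: "\<And>t r s u. s \<le> r \<Longrightarrow> r \<le> t \<Longrightarrow> u \<in> Xc \<tau> \<Longrightarrow>
                       S t r (S r s u) = S t s u"
    and st: "s \<le> t"
  shows "S t s ` Gset S p \<tau> s \<gamma> = Gset S p \<tau> t \<gamma>"
proof -
  interpret periodic_semiflow S \<tau> p
    using assms by unfold_locales auto
  have "Gset S p \<tau> t \<gamma> \<subseteq> S t s ` Gset S p \<tau> s \<gamma>"
  proof
    fix v
    assume v: "v \<in> Gset S p \<tau> t \<gamma>"
    define j where "j = nat \<lceil>(t - s) / p\<rceil>"
    have "(t - s) / p \<le> real j"
      unfolding j_def by linarith
    then have before: "t - real j * p \<le> s"
      using p_pos by (simp add: divide_le_eq)
    obtain w where w: "w \<in> Gset S p \<tau> (t - real j * p) \<gamma>" and "S t (t - real j * p) w = v"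
      using Gset_backward[OF v] by blast
    moreover have "w \<in> Xc \<tau>"
      using w unfolding Gset_def by blast
    ultimately have "v = S t s (S s (t - real j * p) w)"
      using semiflow[OF before st] by simp
    moreover have "S s (t - real j * p) w \<in> Gset S p \<tau> s \<gamma>"
      using Gset_image_subset[OF before] w by blast
    ultimately show "v \<in> S t s ` Gset S p \<tau> s \<gamma>"
      by blast
  qed
  then show ?thesis
    using Gset_image_subset[OF st] by blast
qed

end
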